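(* Let $S$ be a group, $A$ a left $S$-act without zero subacts, $B$ any left $S$-act, and $I$ a set with $|I|\ge 1$. Then: (i) $B\amalg A^{(\ast)I}\amalg z_1$ and $B\amalg A\amalg z_1$ are geometrically equivalent; (ii) $B\amalg A^{(\ast)I}\amalg(z_1\amalg z_2)$ and $B\amalg A\amalg(z_1\amalg z_2)$ are geometrically equivalent.
   Context: A left $S$-act is a nonempty set with an action $S\times A\to A$ satisfying $1a=a$, $(st)a=s(ta)$; homomorphisms preserve the action; $\amalg$ denotes coproduct (disjoint union), and $A^{(\ast)I}=\coprod_{i\in I}A_i$ with each $A_i=A$. A zero $S$-act is a one-element $S$-act; $z_1,z_2$ denote zero $S$-acts. A zero subact of $A$ is a one-element subact. For a nonempty finite set $X$, $F_X=\coprod_{x\in X}S_x$ is the free $S$-act on $X$. For an $S$-act $G$ and a relation $T\subseteq F_X\times F_X$, $T'_G=\{\mu:F_X\to G \text{ homomorphism}: T\subseteq\ker\mu\}$ and $T''_G=\bigcap_{\mu\in T'_G}\ker\mu$ (empty intersection $=F_X\times F_X$). $S$-acts $G_1,G_2$ are geometrically equivalent iff $T''_{G_1}=T''_{G_2}$ for all nonempty finite $X$ and all $T\subseteq F_X\times F_X$. *)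

theory Defs
  imports "HOL-Algebra.Group"
begin

type_synonym ('s, 'a) sact = "'a set \<times> ('s \<Rightarrow> 'a \<Rightarrow> 'a)"

definition is_act :: "('s, 'm) monoid_scheme \<Rightarrow> ('s, 'a) sact \<Rightarrow> bool" where
  "is_act S A \<longleftrightarrow> fst A \<noteq> {}
     \<and> (\<forall>s\<in>carrier S. \<forall>a\<in>fst A. snd A s a \<in> fst A)
     \<and> (\<forall>a\<in>fst A. snd A \<one>\<^bsub>S\<^esub> a = a)
     \<and> (\<forall>s\<in>carrier S. \<forall>t\<in>carrier S. \<forall>a\<in>fst A. snd A (s \<otimes>\<^bsub>S\<^esub> t) a = snd A s (snd A t a))"

definition is_zero_act :: "('s, 'm) monoid_scheme \<Rightarrow> ('s, 'a) sact \<Rightarrow> bool" where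
  "is_zero_act S Z \<longleftrightarrow> is_act S Z \<and> card (fst Z) = 1"

text \<open>A has a zero subact: a one-element subact, i.e. an element fixed by all of S.\<close>
definition has_zero_subact :: "('s, 'm) monoid_scheme \<Rightarrow> ('s, 'a) sact \<Rightarrow> bool" where
  "has_zero_subact S A \<longleftrightarrow> (\<exists>a\<in>fst A. \<forall>s\<in>carrier S. snd A s a = a)"

definition coprod :: "('s, 'a) sact \<Rightarrow> ('s, 'b) sact \<Rightarrow> ('s, 'a + 'b) sact" where
  "coprod A B = (Inl ` fst A \<union> Inr ` fst B,
     (\<lambda>s x. case x of Inl a \<Rightarrow> Inl (snd A s a) | Inr b \<Rightarrow> Inr (snd B s b)))"

text \<open>The coproduct \<open>A^{(*)I}\<close> of copies of A indexed by I.\<close>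
definition copower :: "'i set \<Rightarrow> ('s, 'a) sact \<Rightarrow> ('s, 'i \<times> 'a) sact" where
  "copower I A = (I \<times> fst A, (\<lambda>s (i, a). (i, snd A s a)))"

text \<open>Free S-act on X: elements s x, represented as pairs (s, x).\<close>
definition free_act :: "('s, 'm) monoid_scheme \<Rightarrow> 'x set \<Rightarrow> ('s, 's \<times> 'x) sact" where
  "free_act S X = (carrier S \<times> X, (\<lambda>t (s, x). (t \<otimes>\<^bsub>S\<^esub> s, x)))"

definition act_hom :: "('s, 'm) monoid_scheme \<Rightarrow> ('s, 'a) sact \<Rightarrow> ('s, 'b) sact \<Rightarrow> ('a \<Rightarrow> 'b) \<Rightarrow> bool" where
  "act_hom S A B f \<longleftrightarrow> (\<forall>a\<in>fst A. f a \<in> fst B)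
     \<and> (\<forall>s\<in>carrier S. \<forall>a\<in>fst A. f (snd A s a) = snd B s (f a))"

definition hom_ker :: "('s, 'a) sact \<Rightarrow> ('a \<Rightarrow> 'b) \<Rightarrow> ('a \<times> 'a) set" where
  "hom_ker A f = {(p, q). p \<in> fst A \<and> q \<in> fst A \<and> f p = f q}"

text \<open>\<open>T''_G\<close>: intersection of the kernels of all homomorphisms F_X \<rightarrow> G whose
  kernel contains T (the empty intersection being F_X \<times> F_X).\<close>
definition closure_rel :: "('s, 'm) monoid_scheme \<Rightarrow> 'x set \<Rightarrow> ('s, 'g) sact
    \<Rightarrow> (('s \<times> 'x) \<times> ('s \<times> 'x)) set \<Rightarrow> (('s \<times> 'x) \<times> ('s \<times> 'x)) set" where
  "closure_rel S X G T =
     {(p, q). p \<in> fst (free_act S X) \<and> q \<in> fst (free_act S X) \<and>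
        (\<forall>\<mu>. act_hom S (free_act S X) G \<mu> \<and> T \<subseteq> hom_ker (free_act S X) \<mu> \<longrightarrow> \<mu> p = \<mu> q)}"

text \<open>Geometric equivalence; finite sets X of variables are taken as finite sets of naturals.\<close>
definition geom_equiv :: "('s, 'm) monoid_scheme \<Rightarrow> ('s, 'a) sact \<Rightarrow> ('s, 'b) sact \<Rightarrow> bool" where
  "geom_equiv S G1 G2 \<longleftrightarrow>
     (\<forall>X :: nat set. finite X \<and> X \<noteq> {} \<longrightarrow>
        (\<forall>T. T \<subseteq> fst (free_act S X) \<times> fst (free_act S X) \<longrightarrow>
           closure_rel S X G1 T = closure_rel S X G2 T))"

end

theory Submission
  imports Defs
begin

text \<open>Adjoining a point fixed by all of S lets a homomorphism send every copy of A except one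
  to that point, and collapsing copies this way separates any two elements of
  \<open>B \<amalg> A^{(*)I} \<amalg> Z\<close> inside \<open>B \<amalg> A \<amalg> Z\<close>; conversely \<open>B \<amalg> A \<amalg> Z\<close> embeds into
  \<open>B \<amalg> A^{(*)I} \<amalg> Z\<close> as one copy. Acts that separate each other's points by homomorphisms
  have the same closures \<open>T''\<close>, because such a homomorphism composed with \<open>\<mu> : F_X \<rightarrow> G\<close> keeps
  T in its kernel.\<close>

definition hom_separates :: "('s, 'm) monoid_scheme \<Rightarrow> ('s, 'a) sact \<Rightarrow> ('s, 'b) sact \<Rightarrow> bool" where
  "hom_separates S G H \<longleftrightarrow>
     (\<forall>u\<in>fst G. \<forall>v\<in>fst G. u \<noteq> v \<longrightarrow> (\<exists>g. act_hom S G H g \<and> g u \<noteq> g v))"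

lemma act_hom_comp:
  assumes "act_hom S G H g" and "act_hom S F G f"
  shows "act_hom S F H (g \<circ> f)"
  using assms unfolding act_hom_def by auto

lemma hom_separates_if_inj_hom:
  assumes "act_hom S G H h" and "inj_on h (fst G)"
  shows "hom_separates S G H"
  using assms unfolding hom_separates_def inj_on_def by blast

lemma closure_rel_subset_if_hom_separates:
  assumes sep: "hom_separates S G H"
  shows "closure_rel S X H T \<subseteq> closure_rel S X G T"
proof safe
  fix p q assume "(p, q) \<in> closure_rel S X H T"
  then have p: "p \<in> fst (free_act S X)" and q: "q \<in> fst (free_act S X)"
    and closed: "\<And>\<nu>. act_hom S (free_act S X) H \<nu> \<Longrightarrow> T \<subseteq> hom_ker (free_act S X) \<nu> \<Longrightarrow> \<nu> p = \<nu> q"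
    unfolding closure_rel_def by auto
  have "\<mu> p = \<mu> q" if \<mu>: "act_hom S (free_act S X) G \<mu>" and T: "T \<subseteq> hom_ker (free_act S X) \<mu>" for \<mu>
  proof (rule ccontr)
    assume "\<mu> p \<noteq> \<mu> q"
    moreover have "\<mu> p \<in> fst G" "\<mu> q \<in> fst G" using \<mu> p q unfolding act_hom_def by auto
    ultimately obtain g where g: "act_hom S G H g" "g (\<mu> p) \<noteq> g (\<mu> q)"
      using sep unfolding hom_separates_def by blast
    have "T \<subseteq> hom_ker (free_act S X) (g \<circ> \<mu>)" using T unfolding hom_ker_def by auto
    with act_hom_comp[OF g(1) \<mu>] have "(g \<circ> \<mu>) p = (g \<circ> \<mu>) q" by (rule closed)
    with g(2) show False by simp
  qed
  with p q show "(p, q) \<in> closure_rel S X G T" unfolding closure_rel_def by auto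
qed

lemma geom_equiv_if_hom_separates:
  assumes "hom_separates S G H" and "hom_separates S H G"
  shows "geom_equiv S G H"
  using closure_rel_subset_if_hom_separates[OF assms(1)] closure_rel_subset_if_hom_separates[OF assms(2)]
  unfolding geom_equiv_def by blast

lemma hom_separates_copower_collapse:
  fixes A :: "('s, 'a) sact" and B :: "('s, 'b) sact" and I :: "'i set" and Z :: "('s, 'z) sact"
  assumes c: "\<forall>s\<in>carrier S. snd Z s c = c" "c \<in> fst Z"
  shows "hom_separates S (coprod (coprod B (copower I A)) Z) (coprod (coprod B A) Z)"
  unfolding hom_separates_def
proof (intro ballI impI)
  define collapse where "collapse j = (\<lambda>x :: ('b + 'i \<times> 'a) + 'z. case x of
      Inl (Inl b) \<Rightarrow> (Inl (Inl b) :: ('b + 'a) + 'z)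
    | Inl (Inr (i, a)) \<Rightarrow> if i = j then Inl (Inr a) else Inr c
    | Inr z \<Rightarrow> Inr z)" for j
  have hom: "act_hom S (coprod (coprod B (copower I A)) Z) (coprod (coprod B A) Z) (collapse j)" for j
    using c unfolding act_hom_def coprod_def copower_def collapse_def by auto
  fix u v :: "('b + 'i \<times> 'a) + 'z" assume "u \<noteq> v"
  define j where "j = (case u of Inl (Inr (i, a)) \<Rightarrow> i
    | _ \<Rightarrow> (case v of Inl (Inr (i, a)) \<Rightarrow> i | _ \<Rightarrow> undefined))"
  have "collapse j u \<noteq> collapse j v"
    using \<open>u \<noteq> v\<close> unfolding j_def collapse_def by (auto split: sum.splits prod.splits if_splits)
  with hom show "\<exists>g. act_hom S (coprod (coprod B (copower I A)) Z) (coprod (coprod B A) Z) g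
      \<and> g u \<noteq> g v" by blast
qed

lemma hom_separates_copower_inclusion:
  fixes A :: "('s, 'a) sact" and B :: "('s, 'b) sact" and I :: "'i set" and Z :: "('s, 'z) sact"
  assumes "i \<in> I"
  shows "hom_separates S (coprod (coprod B A) Z) (coprod (coprod B (copower I A)) Z)"
proof (rule hom_separates_if_inj_hom)
  define incl where "incl = (\<lambda>x :: ('b + 'a) + 'z. case x of
      Inl (Inl b) \<Rightarrow> (Inl (Inl b) :: ('b + 'i \<times> 'a) + 'z)
    | Inl (Inr a) \<Rightarrow> Inl (Inr (i, a))
    | Inr z \<Rightarrow> Inr z)"
  show "act_hom S (coprod (coprod B A) Z) (coprod (coprod B (copower I A)) Z) incl"
    using assms unfolding act_hom_def coprod_def copower_def incl_def by auto
  show "inj_on incl (fst (coprod (coprod B A) Z))"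
    unfolding incl_def inj_on_def by (auto split: sum.splits)
qed

lemma geom_equiv_copower_with_fixed_point:
  fixes A :: "('s, 'a) sact" and B :: "('s, 'b) sact" and I :: "'i set" and Z :: "('s, 'z) sact"
  assumes "I \<noteq> {}" and "\<forall>s\<in>carrier S. snd Z s c = c" "c \<in> fst Z"
  shows "geom_equiv S (coprod (coprod B (copower I A)) Z) (coprod (coprod B A) Z)"
proof -
  from \<open>I \<noteq> {}\<close> obtain i where "i \<in> I" by blast
  show ?thesis
    by (rule geom_equiv_if_hom_separates[OF hom_separates_copower_collapse[OF assms(2,3)]
          hom_separates_copower_inclusion[OF \<open>i \<in> I\<close>]])
qed

lemma zero_act_fixed_point:
  assumes "is_zero_act S Z"
  obtains c where "\<forall>s\<in>carrier S. snd Z s c = c" "c \<in> fst Z"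
proof -
  from assms obtain c where "fst Z = {c}"
    unfolding is_zero_act_def by (meson card_1_singletonE)
  with assms that show thesis unfolding is_zero_act_def is_act_def by auto
qed

lemma coprod_fixed_point_Inl:
  assumes "\<forall>s\<in>carrier S. snd Z s c = c" "c \<in> fst Z"
  shows "\<forall>s\<in>carrier S. snd (coprod Z W) s (Inl c) = Inl c" "Inl c \<in> fst (coprod Z W)"
  using assms unfolding coprod_def by auto

theorem proposition3p15:
  fixes S :: "('s, 'm) monoid_scheme"
    and A :: "('s, 'a) sact" and B :: "('s, 'b) sact" and I :: "'i set"
    and z1 :: "('s, 'z1) sact" and z2 :: "('s, 'z2) sact"
  assumes "group S"
    and "is_act S A" and "\<not> has_zero_subact S A"
    and "is_act S B"
    and "I \<noteq> {}"
    and "is_zero_act S z1" and "is_zero_act S z2"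
  shows "geom_equiv S (coprod (coprod B (copower I A)) z1) (coprod (coprod B A) z1)
       \<and> geom_equiv S (coprod (coprod B (copower I A)) (coprod z1 z2))
                      (coprod (coprod B A) (coprod z1 z2))"
proof -
  obtain c where c: "\<forall>s\<in>carrier S. snd z1 s c = c" "c \<in> fst z1"
    using zero_act_fixed_point[OF \<open>is_zero_act S z1\<close>] .
  show ?thesis
    using geom_equiv_copower_with_fixed_point[OF \<open>I \<noteq> {}\<close> c]
      geom_equiv_copower_with_fixed_point[OF \<open>I \<noteq> {}\<close> coprod_fixed_point_Inl[OF c]]
    by blast
qed

end
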